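(* Let $\mathcal D$ be a dyadic grid in $\mathbf R^d$, $w\in A_{\mathrm{FW}}(\mathcal D)$, $\mathcal S\subseteq\mathcal D$ an $\eta$-sparse collection, $Q_0\in\mathcal S$, and $h_{\mathcal S(Q_0)}:=\sum_{Q\in\mathcal S,\,Q\subseteq Q_0}\mathbf 1_Q$. Then there exists $\delta>0$, depending only on $d$, such that \[ w\big(\{x\in Q_0:h_{\mathcal S(Q_0)}(x)>\lambda\}\big)\lesssim e^{-\frac{\eta\delta}{[w]_{\mathrm{FW}}}\lambda}\,w(Q_0) \] for all $\lambda>0$, with implicit constant depending only on $d$.
   Context: A dyadic grid is $\mathcal D^\alpha=\{2^{-j}([0,1)^d+\alpha+k):j\in\mathbf Z,k\in\mathbf Z^d\}$, $\alpha\in\{0,\frac13,\frac23\}^d$. $\mathcal S$ is $\eta$-sparse if each $Q\in\mathcal S$ has $E_Q\subseteq Q$ with $|E_Q|\ge\eta|Q|$ and $\{E_Q\}$ pairwise disjoint. For a weight $w$, $[w]_{\mathrm{FW}}$ here denotes the dyadic Fujii–Wilson constant $\sup_{Q\in\mathcal D}\frac1{w(Q)}\int_QM(w\mathbf 1_Q)\,dx$ ($M$ the Hardy–Littlewood maximal operator), and $w\in A_{\mathrm{FW}}(\mathcal D)$ means it is finite. *)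

theory Defs
  imports "HOL-Analysis.Analysis"
begin

definition dyadic_cube :: "real^'n \<Rightarrow> int \<Rightarrow> ('n \<Rightarrow> int) \<Rightarrow> (real^'n) set" where
  "dyadic_cube \<alpha> j k = {x. \<forall>i. 2 powr (- real_of_int j) * (\<alpha>$i + real_of_int (k i)) \<le> x$i
        \<and> x$i < 2 powr (- real_of_int j) * (\<alpha>$i + real_of_int (k i) + 1)}"

definition dyadic_grid :: "real^'n \<Rightarrow> (real^'n) set set" where
  "dyadic_grid \<alpha> = {dyadic_cube \<alpha> j k | j k. True}"

definition admissible_shift :: "real^'n \<Rightarrow> bool" where
  "admissible_shift \<alpha> \<longleftrightarrow> (\<forall>i. \<alpha>$i \<in> {0, 1/3, 2/3})"

definition is_weight :: "(real^'n \<Rightarrow> real) \<Rightarrow> bool" where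
  "is_weight w \<longleftrightarrow> w \<in> borel_measurable lebesgue \<and> (\<forall>x. 0 \<le> w x)
     \<and> (\<forall>r. set_integrable lebesgue (cball 0 r) w)"

definition wmeas :: "(real^'n \<Rightarrow> real) \<Rightarrow> (real^'n) set \<Rightarrow> ennreal" where
  "wmeas w E = (\<integral>\<^sup>+x\<in>E. ennreal (w x) \<partial>lebesgue)"

definition hl_max :: "(real^'n \<Rightarrow> real) \<Rightarrow> real^'n \<Rightarrow> ennreal" where
  "hl_max f x = (SUP cr\<in>{(c, r). 0 < r \<and> x \<in> ball c r}.
      (\<integral>\<^sup>+y\<in>ball (fst cr) (snd cr). ennreal \<bar>f y\<bar> \<partial>lebesgue) / emeasure lebesgue (ball (fst cr) (snd cr)))"

definition fw_const :: "real^'n \<Rightarrow> (real^'n \<Rightarrow> real) \<Rightarrow> ennreal" where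
  "fw_const \<alpha> w = (SUP Q\<in>dyadic_grid \<alpha>.
      (\<integral>\<^sup>+x\<in>Q. hl_max (\<lambda>y. indicator Q y * w y) x \<partial>lebesgue) / wmeas w Q)"

definition sparse :: "real \<Rightarrow> (real^'n) set set \<Rightarrow> bool" where
  "sparse \<eta> S \<longleftrightarrow> (\<exists>E. (\<forall>Q\<in>S. E Q \<subseteq> Q \<and> E Q \<in> sets lebesgue
        \<and> ennreal \<eta> * emeasure lebesgue Q \<le> emeasure lebesgue (E Q))
     \<and> (\<forall>Q\<in>S. \<forall>Q'\<in>S. Q \<noteq> Q' \<longrightarrow> E Q \<inter> E Q' = {}))"

definition h_count :: "(real^'n) set set \<Rightarrow> (real^'n) set \<Rightarrow> real^'n \<Rightarrow> ennreal" where
  "h_count S Q0 x = (\<Sum>\<^sub>\<infinity>Q\<in>{Q\<in>S. Q \<subseteq> Q0}. indicator Q x)"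

end

theory Submission
  imports Defs
begin

text \<open>
  Let h be the overlap count of a finite laminar family G satisfying the Carleson packing
  condition with constant K for a measure mu, and for Q in G let h_Q count the members inside Q.
  Along the chain of members containing a point the exponential telescopes:
  e^(s h_Q) 1_Q = e^s 1_Q + (e^s - 1) sum_(Q' strictly inside Q) e^(s h_Q') 1_Q'.
  Integrating and inducting over Q gives int_Q e^(s h_Q) <= 2 mu(Q) as soon as
  e^s (1 + 2K) <= 2 + 2K, which holds for s = 2/(9K); Markov's inequality on a top member Q0
  then bounds mu{h > t} by 2 e^(-st) mu(Q0).

  A sparse family in D^alpha satisfies the packing condition for w dx with K = rho [w]_FW / eta:
  each cube Q lies in a ball B with |B| = rho |Q|, so w(Q)/|B| <= M(w 1_R) on Q inside R, and
  summing over the disjoint sets E_Q inside R gives eta sum w(Q) <= rho int_R M(w 1_R) <= rho [w]_FW w(R).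
  The shifted grid is not nested, but its cubes whose scales have equal parity are, so the family
  splits into two laminar ones; this costs the factor 2 in the constant and in the exponent.
\<close>

section \<open>Laminar families and overlap counts\<close>

definition overlap_count :: "'a set set \<Rightarrow> 'a \<Rightarrow> real" where
  "overlap_count F x = (\<Sum>Q\<in>F. indicator Q x)"

definition laminar :: "'a set set \<Rightarrow> bool" where
  "laminar F \<longleftrightarrow> (\<forall>A\<in>F. \<forall>B\<in>F. A \<inter> B \<noteq> {} \<longrightarrow> A \<subseteq> B \<or> B \<subseteq> A)"

lemma overlap_count_eq_card: "finite F \<Longrightarrow> overlap_count F x = card {Q\<in>F. x \<in> Q}"
  unfolding overlap_count_def by (simp add: indicator_def sum.If_cases Int_def conj_commute)

lemma overlap_count_mono: "finite G \<Longrightarrow> F \<subseteq> G \<Longrightarrow> overlap_count F x \<le> overlap_count G x"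
  unfolding overlap_count_def by (intro sum_mono2) auto

lemma overlap_count_le_cover:
  assumes "finite G" "G \<subseteq> L1 \<union> L2"
  shows "overlap_count G x \<le> overlap_count (G \<inter> L1) x + overlap_count (G \<inter> L2) x"
proof -
  have "overlap_count (A \<union> B) x \<le> overlap_count A x + overlap_count B x" if "finite A" "finite B" for A B
    using that unfolding overlap_count_def by (simp add: sum_Un sum_nonneg)
  moreover have "G = (G \<inter> L1) \<union> (G \<inter> L2)" using assms(2) by blast
  ultimately show ?thesis using assms(1) by (metis finite_Int)
qed

lemma borel_measurable_overlap_count [measurable]:
  "(\<And>Q. Q \<in> F \<Longrightarrow> Q \<in> sets M) \<Longrightarrow> overlap_count F \<in> borel_measurable M"
  unfolding overlap_count_def by (intro borel_measurable_sum borel_measurable_indicator) auto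

lemma laminar_subset: "laminar G \<Longrightarrow> F \<subseteq> G \<Longrightarrow> laminar F"
  unfolding laminar_def by blast

lemma laminar_insert_top: "laminar F \<Longrightarrow> (\<And>Q. Q \<in> F \<Longrightarrow> Q \<subseteq> Q0) \<Longrightarrow> laminar (insert Q0 F)"
  unfolding laminar_def by blast

lemma exp_card_chain:
  fixes C :: "'a set set" and s :: real
  assumes "finite C" and "\<And>A B. A \<in> C \<Longrightarrow> B \<in> C \<Longrightarrow> A \<subseteq> B \<or> B \<subseteq> A"
  shows "(exp s - 1) * (\<Sum>Q\<in>C. exp (s * card {Q'\<in>C. Q' \<subseteq> Q})) = exp s * (exp (s * card C) - 1)"
  using assms
proof (induction "card C" arbitrary: C)
  case 0
  then show ?case by simp
next
  case (Suc n)
  then have "C \<noteq> {}" by auto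
  then obtain m where m: "m \<in> C" "\<And>Q. Q \<in> C \<Longrightarrow> m \<subseteq> Q \<Longrightarrow> Q = m"
    using finite_has_maximal[OF \<open>finite C\<close>] by blast
  have top: "{Q'\<in>C. Q' \<subseteq> m} = C"
    using m Suc.prems(2)[OF _ m(1)] by blast
  define C' where "C' = C - {m}"
  have card_C: "card C = Suc (card C')"
    unfolding C'_def using Suc.prems(1) m(1) Suc.hyps(2) by simp
  have below: "{Q'\<in>C. Q' \<subseteq> Q} = {Q'\<in>C'. Q' \<subseteq> Q}" if "Q \<in> C'" for Q
    using that m top unfolding C'_def by blast
  have "(\<Sum>Q\<in>C. exp (s * card {Q'\<in>C. Q' \<subseteq> Q}))
      = exp (s * card C) + (\<Sum>Q\<in>C'. exp (s * card {Q'\<in>C. Q' \<subseteq> Q}))"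
    unfolding C'_def using Suc.prems(1) m(1) top by (simp add: sum.remove)
  also have "(\<Sum>Q\<in>C'. exp (s * card {Q'\<in>C. Q' \<subseteq> Q})) = (\<Sum>Q\<in>C'. exp (s * card {Q'\<in>C'. Q' \<subseteq> Q}))"
    using below by simp
  finally have sum_C: "(\<Sum>Q\<in>C. exp (s * card {Q'\<in>C. Q' \<subseteq> Q}))
      = exp (s * card C) + (\<Sum>Q\<in>C'. exp (s * card {Q'\<in>C'. Q' \<subseteq> Q}))" .
  have "(exp s - 1) * (\<Sum>Q\<in>C'. exp (s * card {Q'\<in>C'. Q' \<subseteq> Q})) = exp s * (exp (s * card C') - 1)"
    using Suc.hyps(1)[of C'] Suc.hyps(2) Suc.prems card_C unfolding C'_def by simp
  moreover have "exp (s * card C) = exp s * exp (s * card C')"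
    unfolding card_C by (simp add: distrib_left exp_add)
  ultimately show ?case unfolding sum_C by (simp add: algebra_simps)
qed

lemma exp_overlap_count_expansion:
  assumes G: "finite G" "laminar G" and Q: "Q \<in> G" and x: "x \<in> Q"
  shows "exp (s * overlap_count {Q'\<in>G. Q' \<subseteq> Q} x) = exp s + (exp s - 1) *
           (\<Sum>Q'\<in>{Q'\<in>G. Q' \<subset> Q}. indicator Q' x * exp (s * overlap_count {Q''\<in>G. Q'' \<subseteq> Q'} x))"
proof -
  define C where "C = {Q'\<in>G. Q' \<subset> Q \<and> x \<in> Q'}"
  have "finite C" using G(1) unfolding C_def by simp
  have chain: "A \<subseteq> B \<or> B \<subseteq> A" if "A \<in> C" "B \<in> C" for A B
    using G(2) that unfolding C_def laminar_def by blast
  have "{Q'\<in>{Q'\<in>G. Q' \<subseteq> Q}. x \<in> Q'} = insert Q C" "Q \<notin> C"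
    using Q x unfolding C_def by blast+
  then have count_Q: "overlap_count {Q'\<in>G. Q' \<subseteq> Q} x = 1 + card C"
    using G(1) \<open>finite C\<close> by (simp add: overlap_count_eq_card)
  have count_below: "overlap_count {Q''\<in>G. Q'' \<subseteq> Q'} x = card {Q''\<in>C. Q'' \<subseteq> Q'}" if "Q' \<in> C" for Q'
  proof -
    have "{Q''\<in>{Q''\<in>G. Q'' \<subseteq> Q'}. x \<in> Q''} = {Q''\<in>C. Q'' \<subseteq> Q'}"
      using that unfolding C_def by blast
    then show ?thesis using G(1) by (simp add: overlap_count_eq_card)
  qed
  have C_eq: "C = {Q'\<in>{Q'\<in>G. Q' \<subset> Q}. x \<in> Q'}" unfolding C_def by auto
  have "(\<Sum>Q'\<in>{Q'\<in>G. Q' \<subset> Q}. indicator Q' x * exp (s * overlap_count {Q''\<in>G. Q'' \<subseteq> Q'} x))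
      = (\<Sum>Q'\<in>{Q'\<in>G. Q' \<subset> Q}. if x \<in> Q' then exp (s * overlap_count {Q''\<in>G. Q'' \<subseteq> Q'} x) else 0)"
    (is "?sum = _") by (intro sum.cong) (auto simp: indicator_def)
  also have "\<dots> = (\<Sum>Q'\<in>C. exp (s * overlap_count {Q''\<in>G. Q'' \<subseteq> Q'} x))"
    unfolding C_eq by (rule sum.inter_filter[symmetric]) (use G(1) in simp)
  also have "\<dots> = (\<Sum>Q'\<in>C. exp (s * card {Q''\<in>C. Q'' \<subseteq> Q'}))"
    using count_below by simp
  finally have "?sum = (\<Sum>Q'\<in>C. exp (s * card {Q''\<in>C. Q'' \<subseteq> Q'}))" .
  then show ?thesis
    using exp_card_chain[OF \<open>finite C\<close> chain, of s] count_Q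
    by (simp add: exp_add algebra_simps)
qed

section \<open>Exponential decay for Carleson families\<close>

definition carleson_packing :: "'a measure \<Rightarrow> real \<Rightarrow> 'a set set \<Rightarrow> bool" where
  "carleson_packing M K F \<longleftrightarrow> (\<forall>R\<in>F. \<forall>G\<subseteq>F. finite G \<longrightarrow> (\<forall>Q\<in>G. Q \<subseteq> R) \<longrightarrow>
     (\<Sum>Q\<in>G. emeasure M Q) \<le> ennreal K * emeasure M R)"

lemma carleson_packingD:
  assumes "carleson_packing M K F" "R \<in> F" "G \<subseteq> F" "finite G" "\<And>Q. Q \<in> G \<Longrightarrow> Q \<subseteq> R"
  shows "(\<Sum>Q\<in>G. emeasure M Q) \<le> ennreal K * emeasure M R"
  using assms unfolding carleson_packing_def by simp

lemma carleson_packing_subset: "carleson_packing M K F \<Longrightarrow> F' \<subseteq> F \<Longrightarrow> carleson_packing M K F'"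
  unfolding carleson_packing_def by (meson subset_iff subset_trans)

lemma ennreal_exp_overlap_count_expansion:
  assumes G: "finite G" "laminar G" and Q: "Q \<in> G" and s: "0 \<le> s"
  shows "ennreal (exp (s * overlap_count {Q'\<in>G. Q' \<subseteq> Q} x)) * indicator Q x
    = ennreal (exp s) * indicator Q x + ennreal (exp s - 1) *
      (\<Sum>Q'\<in>{Q'\<in>G. Q' \<subset> Q}. ennreal (exp (s * overlap_count {Q''\<in>G. Q'' \<subseteq> Q'} x)) * indicator Q' x)"
proof (cases "x \<in> Q")
  case True
  let ?f = "\<lambda>Q'. indicator Q' x * exp (s * overlap_count {Q''\<in>G. Q'' \<subseteq> Q'} x)"
  have "ennreal (exp (s * overlap_count {Q'\<in>G. Q' \<subseteq> Q} x)) = ennreal (exp s + (exp s - 1) * (\<Sum>Q'\<in>{Q'\<in>G. Q' \<subset> Q}. ?f Q'))"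
    using exp_overlap_count_expansion[OF G Q True] by simp
  also have "\<dots> = ennreal (exp s) + ennreal (exp s - 1) * (\<Sum>Q'\<in>{Q'\<in>G. Q' \<subset> Q}. ennreal (?f Q'))"
    using s by (simp add: ennreal_mult[of "exp s - 1"] sum_nonneg)
  finally show ?thesis
    using True by (simp add: ennreal_mult ennreal_indicator mult.commute)
next
  case False
  then have "x \<notin> Q'" if "Q' \<in> {Q'\<in>G. Q' \<subset> Q}" for Q' using that by blast
  then show ?thesis using False by simp
qed

lemma exp_packing_step_le:
  fixes s K :: real and m :: ennreal
  assumes "0 \<le> s" "0 \<le> K" "exp s * (1 + 2 * K) \<le> 2 + 2 * K"
  shows "ennreal (exp s) * m + ennreal (exp s - 1) * (2 * (ennreal K * m)) \<le> 2 * m"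
proof -
  have "ennreal ((exp s - 1) * (2 * K)) = ennreal (exp s - 1) * (2 * ennreal K)"
    using assms(1,2) by (simp add: ennreal_mult'' ennreal_mult)
  then have "ennreal (exp s + (exp s - 1) * (2 * K)) = ennreal (exp s) + ennreal (exp s - 1) * (2 * ennreal K)"
    using assms(1,2) by (subst ennreal_plus) auto
  then have "ennreal (exp s) * m + ennreal (exp s - 1) * (2 * (ennreal K * m)) = ennreal (exp s + (exp s - 1) * (2 * K)) * m"
    by (simp add: distrib_right mult.assoc)
  also have "\<dots> \<le> 2 * m"
  proof -
    have "exp s + (exp s - 1) * (2 * K) \<le> 2" using assms(3) by (simp add: algebra_simps)
    then show ?thesis using ennreal_leI by (intro mult_right_mono) fastforce+
  qed
  finally show ?thesis .
qed

lemma laminar_exp_overlap_integral_le: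
  assumes G: "finite G" "laminar G" "G \<subseteq> sets M" and packing: "carleson_packing M K G"
    and K: "0 \<le> K" and s: "0 \<le> s" "exp s * (1 + 2 * K) \<le> 2 + 2 * K" and "Q \<in> G"
  shows "(\<integral>\<^sup>+x. ennreal (exp (s * overlap_count {Q'\<in>G. Q' \<subseteq> Q} x)) * indicator Q x \<partial>M) \<le> 2 * emeasure M Q"
  using \<open>Q \<in> G\<close>
proof (induction "card {Q'\<in>G. Q' \<subset> Q}" arbitrary: Q rule: less_induct)
  case less
  define \<phi> where "\<phi> Q' x = ennreal (exp (s * overlap_count {Q''\<in>G. Q'' \<subseteq> Q'} x)) * indicator Q' x" for Q' x
  define D where "D = {Q'\<in>G. Q' \<subset> Q}"
  have "finite D" using G(1) unfolding D_def by simp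
  have D_measurable: "\<phi> Q' \<in> borel_measurable M" if "Q' \<in> D" for Q'
  proof -
    have "Q' \<in> sets M" "overlap_count {Q''\<in>G. Q'' \<subseteq> Q'} \<in> borel_measurable M"
      using that G(3) unfolding D_def by (auto intro!: borel_measurable_overlap_count)
    then show ?thesis unfolding \<phi>_def by measurable
  qed
  have IH: "(\<integral>\<^sup>+x. \<phi> Q' x \<partial>M) \<le> 2 * emeasure M Q'" if "Q' \<in> D" for Q'
  proof -
    have "{Q''\<in>G. Q'' \<subset> Q'} \<subset> D" "Q' \<in> G" using that unfolding D_def by blast+
    moreover from this have "card {Q''\<in>G. Q'' \<subset> Q'} < card D"
      using \<open>finite D\<close> by (intro psubset_card_mono)
    ultimately show ?thesis unfolding \<phi>_def D_def by (intro less.hyps)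
  qed
  have "(\<integral>\<^sup>+x. \<phi> Q x \<partial>M) = (\<integral>\<^sup>+x. ennreal (exp s) * indicator Q x \<partial>M)
      + (\<integral>\<^sup>+x. ennreal (exp s - 1) * (\<Sum>Q'\<in>D. \<phi> Q' x) \<partial>M)"
    unfolding \<phi>_def ennreal_exp_overlap_count_expansion[OF G(1,2) less.prems s(1)]
    using less.prems G(3) D_measurable unfolding \<phi>_def D_def by (intro nn_integral_add) auto
  also have "\<dots> = ennreal (exp s) * emeasure M Q + ennreal (exp s - 1) * (\<Sum>Q'\<in>D. \<integral>\<^sup>+x. \<phi> Q' x \<partial>M)"
    using less.prems G(3) D_measurable by (simp add: nn_integral_cmult_indicator nn_integral_cmult nn_integral_sum subset_eq)
  also have "\<dots> \<le> ennreal (exp s) * emeasure M Q + ennreal (exp s - 1) * (2 * (ennreal K * emeasure M Q))"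
  proof -
    have "(\<Sum>Q'\<in>D. \<integral>\<^sup>+x. \<phi> Q' x \<partial>M) \<le> 2 * (\<Sum>Q'\<in>D. emeasure M Q')"
      using IH by (simp add: sum_distrib_left sum_mono)
    also have "\<dots> \<le> 2 * (ennreal K * emeasure M Q)"
      using carleson_packingD[OF packing less.prems, of D] \<open>finite D\<close> unfolding D_def
      by (intro mult_left_mono) auto
    finally show ?thesis by (intro add_left_mono mult_left_mono) auto
  qed
  also have "\<dots> \<le> 2 * emeasure M Q"
    using s K by (intro exp_packing_step_le)
  finally show ?case unfolding \<phi>_def .
qed

lemma level_set_sets:
  fixes f :: "'a \<Rightarrow> 'b::{linorder_topology, second_countable_topology}"
  assumes "Q0 \<in> sets M" "f \<in> borel_measurable M"
  shows "{x\<in>Q0. t < f x} \<in> sets M"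
proof -
  have "{x\<in>Q0. t < f x} = Q0 \<inter> {x\<in>space M. t < f x}"
    using sets.sets_into_space[OF assms(1)] by blast
  moreover have "{x\<in>space M. t < f x} \<in> sets M" using assms(2) by measurable
  ultimately show ?thesis using assms(1) by simp
qed

lemma laminar_tail_le:
  assumes G: "finite G" "laminar G" "G \<subseteq> sets M" and packing: "carleson_packing M K G"
    and K: "0 \<le> K" and s: "0 \<le> s" "exp s * (1 + 2 * K) \<le> 2 + 2 * K"
    and Q0: "Q0 \<in> G" "\<And>Q. Q \<in> G \<Longrightarrow> Q \<subseteq> Q0"
  shows "emeasure M {x\<in>Q0. t < overlap_count G x} \<le> ennreal (2 * exp (- (s * t))) * emeasure M Q0"
proof -
  define L where "L = {x\<in>Q0. t < overlap_count G x}"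
  have "Q0 \<in> sets M" "overlap_count G \<in> borel_measurable M" using G(3) Q0(1) by (auto intro!: borel_measurable_overlap_count)
  then have "L \<in> sets M" unfolding L_def by (rule level_set_sets)
  have "ennreal (exp (s * t)) * emeasure M L = (\<integral>\<^sup>+x. ennreal (exp (s * t)) * indicator L x \<partial>M)"
    using \<open>L \<in> sets M\<close> by (simp add: nn_integral_cmult_indicator)
  also have "\<dots> \<le> (\<integral>\<^sup>+x. ennreal (exp (s * overlap_count {Q\<in>G. Q \<subseteq> Q0} x)) * indicator Q0 x \<partial>M)"
  proof (intro nn_integral_mono)
    fix x
    have "{Q\<in>G. Q \<subseteq> Q0} = G" using Q0(2) by blast
    moreover have "exp (s * t) \<le> exp (s * overlap_count G x)" if "x \<in> L"
      using that s(1) unfolding L_def by (simp add: mult_left_mono)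
    ultimately show "ennreal (exp (s * t)) * indicator L x
        \<le> ennreal (exp (s * overlap_count {Q\<in>G. Q \<subseteq> Q0} x)) * indicator Q0 x"
      unfolding L_def by (auto simp: indicator_def ennreal_leI)
  qed
  also have "\<dots> \<le> 2 * emeasure M Q0"
    by (rule laminar_exp_overlap_integral_le[OF G packing K s Q0(1)])
  finally have "ennreal (exp (s * t)) * emeasure M L \<le> 2 * emeasure M Q0" .
  moreover have "ennreal (exp (- (s * t))) * ennreal (exp (s * t)) = 1"
    by (simp add: ennreal_mult'[symmetric] exp_minus_inverse mult.commute)
  ultimately have "emeasure M L \<le> ennreal (exp (- (s * t))) * (2 * emeasure M Q0)"
    by (metis mult.assoc mult_1 mult_left_mono zero_le)
  then show ?thesis
    unfolding L_def by (simp add: ennreal_mult'' mult.commute mult.left_commute)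
qed

lemma carleson_finite_tail_le:
  assumes packing: "carleson_packing M K F" and F: "F \<subseteq> sets M"
    and cover: "F \<subseteq> L1 \<union> L2" "laminar L1" "laminar L2"
    and Q0: "Q0 \<in> F" and G: "finite G" "G \<subseteq> {Q\<in>F. Q \<subseteq> Q0}"
    and K: "0 \<le> K" and s: "0 \<le> s" "exp s * (1 + 2 * K) \<le> 2 + 2 * K"
  shows "emeasure M {x\<in>Q0. t < overlap_count G x} \<le> ennreal (4 * exp (- (s * t / 2))) * emeasure M Q0"
proof -
  define H where "H L = insert Q0 (G \<inter> L)" for L
  have H: "finite (H L)" "H L \<subseteq> F" "Q0 \<in> H L" "\<And>Q. Q \<in> H L \<Longrightarrow> Q \<subseteq> Q0" for L
    using G Q0 unfolding H_def by auto
  define A where "A L = {x\<in>Q0. t / 2 < overlap_count (H L) x}" for L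
  have A_sets: "A L \<in> sets M" for L
    unfolding A_def using Q0 F H(1,2) by (intro level_set_sets borel_measurable_overlap_count) auto
  have tail: "emeasure M (A L) \<le> ennreal (2 * exp (- (s * t / 2))) * emeasure M Q0" if "laminar L" for L
  proof -
    have "laminar (G \<inter> L)" using that by (rule laminar_subset) simp
    then have "laminar (H L)" unfolding H_def using G(2) by (intro laminar_insert_top) auto
    moreover have "H L \<subseteq> sets M" "carleson_packing M K (H L)"
      using H(2) F carleson_packing_subset[OF packing] by auto
    ultimately show ?thesis
      using laminar_tail_le[OF H(1) _ _ _ K s H(3) H(4), where t = "t / 2"] unfolding A_def by simp
  qed
  have count_le: "overlap_count G x \<le> overlap_count (H L1) x + overlap_count (H L2) x" for x
  proof -
    have "overlap_count G x \<le> overlap_count (G \<inter> L1) x + overlap_count (G \<inter> L2) x"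
      using G cover(1) by (intro overlap_count_le_cover) auto
    also have "\<dots> \<le> overlap_count (H L1) x + overlap_count (H L2) x"
      using H(1) unfolding H_def by (intro add_mono overlap_count_mono) auto
    finally show ?thesis .
  qed
  have "{x\<in>Q0. t < overlap_count G x} \<subseteq> A L1 \<union> A L2"
  proof
    fix x assume x: "x \<in> {x\<in>Q0. t < overlap_count G x}"
    then have "t / 2 < overlap_count (H L1) x \<or> t / 2 < overlap_count (H L2) x"
      using count_le[of x] by auto
    then show "x \<in> A L1 \<union> A L2" using x unfolding A_def by auto
  qed
  then have "emeasure M {x\<in>Q0. t < overlap_count G x} \<le> emeasure M (A L1 \<union> A L2)"
    using A_sets by (intro emeasure_mono) auto
  also have "\<dots> \<le> emeasure M (A L1) + emeasure M (A L2)"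
    using A_sets by (intro emeasure_subadditive)
  also have "\<dots> \<le> ennreal (2 * exp (- (s * t / 2))) * emeasure M Q0 + ennreal (2 * exp (- (s * t / 2))) * emeasure M Q0"
    using tail cover(2,3) by (intro add_mono)
  also have "\<dots> = ennreal (4 * exp (- (s * t / 2))) * emeasure M Q0"
    by (simp add: distrib_right[symmetric] ennreal_plus[symmetric] del: ennreal_plus)
  finally show ?thesis .
qed

lemma exp_packing_rate_le:
  fixes K :: real
  assumes "1 \<le> K"
  shows "exp (2 / (9 * K)) * (1 + 2 * K) \<le> 2 + 2 * K"
proof -
  define y where "y = 1 / (1 + 2 * K)"
  have y: "0 \<le> y" "y \<le> 1 / 3" "1 / (3 * K) \<le> y"
    unfolding y_def using assms by (auto simp: field_simps)
  have "2 / (9 * K) \<le> 2 / 3 * y" using y(3) by (simp add: field_simps)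
  also have "\<dots> \<le> y - y\<^sup>2"
    using y(1,2) mult_left_mono[of "3 * y" 1 y] by (simp add: power2_eq_square algebra_simps)
  also have "\<dots> \<le> ln (1 + y)" using y(1,2) by (intro ln_one_plus_pos_lower_bound) auto
  finally have "exp (2 / (9 * K)) \<le> exp (ln (1 + y))" by simp
  also have "\<dots> = 1 + y" using y(1) by simp
  finally have "exp (2 / (9 * K)) \<le> 1 + y" .
  then have "exp (2 / (9 * K)) * (1 + 2 * K) \<le> (1 + y) * (1 + 2 * K)"
    using assms by (intro mult_right_mono) auto
  also have "\<dots> = 2 + 2 * K" unfolding y_def using assms by (simp add: field_simps)
  finally show ?thesis .
qed

lemma carleson_packing_ge_one:
  assumes "carleson_packing M K F" "Q \<in> F" "0 < emeasure M Q" "emeasure M Q < \<infinity>"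
  shows "1 \<le> K"
proof (rule ccontr)
  assume "\<not> 1 \<le> K"
  then have "ennreal K * emeasure M Q < 1 * emeasure M Q"
    using assms(3,4) by (intro ennreal_mult_strict_right_mono) (auto simp: ennreal_less_one_iff)
  moreover have "emeasure M Q \<le> ennreal K * emeasure M Q"
    using carleson_packingD[OF assms(1,2), of "{Q}"] assms(2) by simp
  ultimately show False by simp
qed

lemma infsum_ennreal_eq_SUP_from_nat_into:
  fixes h :: "'a \<Rightarrow> ennreal"
  assumes "countable A" "A \<noteq> {}"
  shows "(\<Sum>\<^sub>\<infinity>a\<in>A. h a) = (SUP n. \<Sum>a\<in>from_nat_into A ` {..<n}. h a)"
proof -
  have prefix: "from_nat_into A ` {..<n} \<subseteq> A" for n
    using range_from_nat_into_subset[OF assms(2)] by blast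
  have cofinal: "\<exists>n. F \<subseteq> from_nat_into A ` {..<n}" if F: "finite F" "F \<subseteq> A" for F
  proof -
    obtain C where "finite C" "F = from_nat_into A ` C"
      using finite_subset_image[OF \<open>finite F\<close>] subset_range_from_nat_into[OF assms(1)] F(2) by blast
    moreover obtain n where "C \<subseteq> {..<n}" using \<open>finite C\<close> finite_nat_iff_bounded by blast
    ultimately show ?thesis by blast
  qed
  have "(\<Sum>\<^sub>\<infinity>a\<in>A. h a) = (SUP F\<in>{F. finite F \<and> F \<subseteq> A}. sum h F)"
    by (rule nonneg_infsum_complete) simp
  also have "\<dots> = (SUP n. \<Sum>a\<in>from_nat_into A ` {..<n}. h a)"
  proof (rule antisym)
    show "(SUP F\<in>{F. finite F \<and> F \<subseteq> A}. sum h F) \<le> (SUP n. \<Sum>a\<in>from_nat_into A ` {..<n}. h a)"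
    proof (rule SUP_least)
      fix F assume "F \<in> {F. finite F \<and> F \<subseteq> A}"
      then obtain n where "F \<subseteq> from_nat_into A ` {..<n}" using cofinal by blast
      then have "sum h F \<le> (\<Sum>a\<in>from_nat_into A ` {..<n}. h a)" by (intro sum_mono2) auto
      then show "sum h F \<le> (SUP n. \<Sum>a\<in>from_nat_into A ` {..<n}. h a)" by (rule SUP_upper2[OF UNIV_I])
    qed
    show "(SUP n. \<Sum>a\<in>from_nat_into A ` {..<n}. h a) \<le> (SUP F\<in>{F. finite F \<and> F \<subseteq> A}. sum h F)"
      using prefix by (intro SUP_least SUP_upper) auto
  qed
  finally show ?thesis .
qed

lemma sum_indicator_eq_overlap_count: "(\<Sum>Q\<in>F. indicator Q x :: ennreal) = ennreal (overlap_count F x)"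
  unfolding overlap_count_def by (simp add: ennreal_indicator[symmetric])

lemma borel_measurable_infsum_indicator:
  assumes "countable A" "A \<subseteq> sets M"
  shows "(\<lambda>x. \<Sum>\<^sub>\<infinity>Q\<in>A. indicator Q x :: ennreal) \<in> borel_measurable M"
proof (cases "A = {}")
  case False
  have "(\<lambda>x. SUP n. ennreal (overlap_count (from_nat_into A ` {..<n}) x)) \<in> borel_measurable M"
    using range_from_nat_into_subset[OF False] assms(2)
    by (intro borel_measurable_SUP measurable_compose[OF borel_measurable_overlap_count measurable_ennreal]) auto
  then show ?thesis
    by (simp add: infsum_ennreal_eq_SUP_from_nat_into[OF assms(1) False] sum_indicator_eq_overlap_count)
qed simp

lemma emeasure_infsum_indicator_level_set_le:
  assumes A: "countable A" "A \<subseteq> sets M" and "Q0 \<in> sets M" "0 \<le> t"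
    and finite_bound: "\<And>G. finite G \<Longrightarrow> G \<subseteq> A \<Longrightarrow> emeasure M {x\<in>Q0. t < overlap_count G x} \<le> b"
  shows "emeasure M {x\<in>Q0. ennreal t < (\<Sum>\<^sub>\<infinity>Q\<in>A. indicator Q x)} \<le> b"
proof (cases "A = {}")
  case False
  define B where "B n = {x\<in>Q0. t < overlap_count (from_nat_into A ` {..<n}) x}" for n
  have prefix: "from_nat_into A ` {..<n} \<subseteq> A" for n
    using range_from_nat_into_subset[OF False] by blast
  have "{x\<in>Q0. ennreal t < (\<Sum>\<^sub>\<infinity>Q\<in>A. indicator Q x)} = (\<Union>n. B n)"
    unfolding B_def infsum_ennreal_eq_SUP_from_nat_into[OF A(1) False] using \<open>0 \<le> t\<close>
    by (auto simp: sum_indicator_eq_overlap_count less_SUP_iff ennreal_less_iff)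
  moreover have "incseq B"
    unfolding B_def incseq_def
    by (auto intro: less_le_trans overlap_count_mono[OF finite_imageI[OF finite_lessThan]] image_mono)
  moreover have "B n \<in> sets M" for n
    unfolding B_def using \<open>Q0 \<in> sets M\<close> prefix A(2)
    by (intro level_set_sets borel_measurable_overlap_count) auto
  ultimately have "emeasure M {x\<in>Q0. ennreal t < (\<Sum>\<^sub>\<infinity>Q\<in>A. indicator Q x)} = (SUP n. emeasure M (B n))"
    by (simp add: SUP_emeasure_incseq image_subset_iff)
  also have "\<dots> \<le> b"
    unfolding B_def using prefix by (intro SUP_least finite_bound) auto
  finally show ?thesis .
qed simp

lemma carleson_tail_le:
  assumes packing: "carleson_packing M K F" and F: "countable F" "F \<subseteq> sets M"
    and cover: "F \<subseteq> L1 \<union> L2" "laminar L1" "laminar L2" and Q0: "Q0 \<in> F" and t: "0 \<le> t"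
  shows "emeasure M {x\<in>Q0. ennreal t < (\<Sum>\<^sub>\<infinity>Q\<in>{Q\<in>F. Q \<subseteq> Q0}. indicator Q x)}
           \<le> ennreal (4 * exp (- t / (9 * K))) * emeasure M Q0"
    (is "emeasure M ?L \<le> _")
proof -
  have "Q0 \<in> sets M" using Q0 F(2) by blast
  consider "emeasure M Q0 = 0" | "emeasure M Q0 = \<infinity>" | "0 < emeasure M Q0" "emeasure M Q0 < \<infinity>"
    by (cases "emeasure M Q0 = 0"; cases "emeasure M Q0 = \<infinity>") (auto simp: zero_less_iff_neq_zero less_top)
  then show ?thesis
  proof cases
    case 1
    moreover have "emeasure M ?L \<le> emeasure M Q0"
      using \<open>Q0 \<in> sets M\<close> by (intro emeasure_mono) auto
    ultimately show ?thesis by simp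
  next
    case 2
    then show ?thesis by simp
  next
    case 3
    have "1 \<le> K" using carleson_packing_ge_one[OF packing Q0 3] .
    define s where "s = 2 / (9 * K)"
    have s: "0 \<le> s" "exp s * (1 + 2 * K) \<le> 2 + 2 * K"
      unfolding s_def using \<open>1 \<le> K\<close> exp_packing_rate_le by auto
    have rate: "- (s * t / 2) = - t / (9 * K)" unfolding s_def by simp
    have "emeasure M {x\<in>Q0. t < overlap_count G x} \<le> ennreal (4 * exp (- t / (9 * K))) * emeasure M Q0"
      if "finite G" "G \<subseteq> {Q\<in>F. Q \<subseteq> Q0}" for G
      using carleson_finite_tail_le[OF packing F(2) cover Q0 that _ s, where t = t] \<open>1 \<le> K\<close>
      unfolding rate by simp
    then show ?thesis
      using F \<open>Q0 \<in> sets M\<close> t by (intro emeasure_infsum_indicator_level_set_le) auto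
  qed
qed

section \<open>Shifted dyadic cubes\<close>

lemma mem_dyadic_cube_iff:
  "x \<in> dyadic_cube \<alpha> j k \<longleftrightarrow> (\<forall>i. \<lfloor>2 powr real_of_int j * x$i - \<alpha>$i\<rfloor> = k i)"
proof -
  have "2 powr - real_of_int j * (\<alpha>$i + real_of_int (k i)) \<le> x$i
          \<and> x$i < 2 powr - real_of_int j * (\<alpha>$i + real_of_int (k i) + 1)
        \<longleftrightarrow> \<lfloor>2 powr real_of_int j * x$i - \<alpha>$i\<rfloor> = k i" for i
    by (simp add: floor_eq_iff powr_minus field_simps)
  then show ?thesis unfolding dyadic_cube_def by auto
qed

lemma four_power_mod_three: "\<exists>q::int. (4::real) ^ s = 3 * of_int q + 1"
proof (induction s)
  case 0
  show ?case by (rule exI[of _ 0]) simp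
next
  case (Suc s)
  then obtain q :: int where "(4::real) ^ s = 3 * of_int q + 1" by blast
  then have "(4::real) ^ Suc s = 3 * of_int (4 * q + 1) + 1" by simp
  then show ?case by blast
qed

text \<open>
  For a in {0, 1/3, 2/3} the number (4^s - 1) a is an integer, so the index of a point at scale j
  is a function of its index at scale j + 2s. For odd scale differences this fails when a is not 0,
  so the shifted grid is only laminar on scales of equal parity.
\<close>

lemma floor_coarser_scale_eq:
  fixes a y z :: real
  assumes a: "a \<in> {0, 1/3, 2/3}"
    and eq: "\<lfloor>2 powr real_of_int (j + 2 * int s) * y - a\<rfloor> = \<lfloor>2 powr real_of_int (j + 2 * int s) * z - a\<rfloor>"
  shows "\<lfloor>2 powr real_of_int j * y - a\<rfloor> = \<lfloor>2 powr real_of_int j * z - a\<rfloor>"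
proof -
  obtain q :: int where q: "(4::real) ^ s = 3 * of_int q + 1" using four_power_mod_three by blast
  have "\<exists>m::int. ((4::real) ^ s - 1) * a = of_int m"
  proof -
    from a consider "a = 0" | "a = 1/3" | "a = 2/3" by blast
    then show ?thesis
      by cases (use q in \<open>auto intro: exI[of _ 0] exI[of _ q] exI[of _ "2 * q"]\<close>)
  qed
  then obtain m :: int where m: "((4::real) ^ s - 1) * a = of_int m" by blast
  have "2 powr real_of_int (j + 2 * int s) = 2 powr real (2 * s) * 2 powr real_of_int j"
    by (simp add: powr_add[symmetric] add.commute)
  also have "2 powr real (2 * s) = (4::real) ^ s"
    by (subst powr_realpow) (simp_all add: power_mult)
  finally have scale: "2 powr real_of_int (j + 2 * int s) = (4::real) ^ s * 2 powr real_of_int j" .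
  have "\<lfloor>2 powr real_of_int j * u - a\<rfloor> = (\<lfloor>2 powr real_of_int (j + 2 * int s) * u - a\<rfloor> - m) div 4 ^ s" for u
  proof -
    have "2 powr real_of_int (j + 2 * int s) * u - a = 4 ^ s * (2 powr real_of_int j * u - a) + of_int m"
      unfolding scale m[symmetric] by (simp add: algebra_simps)
    then have "\<lfloor>2 powr real_of_int (j + 2 * int s) * u - a\<rfloor> - m = \<lfloor>4 ^ s * (2 powr real_of_int j * u - a)\<rfloor>"
      by simp
    also have "\<dots> div 4 ^ s = \<lfloor>2 powr real_of_int j * u - a\<rfloor>"
      using floor_divide_real_eq_div[of "4 ^ s" "4 ^ s * (2 powr real_of_int j * u - a)"] by simp
    finally show ?thesis by simp
  qed
  then show ?thesis using eq by simp
qed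

lemma dyadic_cube_nested:
  assumes "admissible_shift \<alpha>" "x \<in> dyadic_cube \<alpha> j k" "x \<in> dyadic_cube \<alpha> (j + 2 * int s) k'"
  shows "dyadic_cube \<alpha> (j + 2 * int s) k' \<subseteq> dyadic_cube \<alpha> j k"
proof
  fix y assume y: "y \<in> dyadic_cube \<alpha> (j + 2 * int s) k'"
  have "\<lfloor>2 powr real_of_int j * y$i - \<alpha>$i\<rfloor> = \<lfloor>2 powr real_of_int j * x$i - \<alpha>$i\<rfloor>" for i
  proof (rule floor_coarser_scale_eq)
    show "\<alpha>$i \<in> {0, 1/3, 2/3}" using assms(1) unfolding admissible_shift_def by blast
    show "\<lfloor>2 powr real_of_int (j + 2 * int s) * y$i - \<alpha>$i\<rfloor> = \<lfloor>2 powr real_of_int (j + 2 * int s) * x$i - \<alpha>$i\<rfloor>"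
      using y assms(3) unfolding mem_dyadic_cube_iff by simp
  qed
  then show "y \<in> dyadic_cube \<alpha> j k" using assms(2) unfolding mem_dyadic_cube_iff by simp
qed

definition dyadic_subgrid :: "real^'n \<Rightarrow> bool \<Rightarrow> (real^'n) set set" where
  "dyadic_subgrid \<alpha> p = {dyadic_cube \<alpha> j k | j k. even j = p}"

lemma dyadic_grid_eq_subgrids: "dyadic_grid \<alpha> = dyadic_subgrid \<alpha> True \<union> dyadic_subgrid \<alpha> False"
  unfolding dyadic_grid_def dyadic_subgrid_def by auto

lemma laminar_dyadic_subgrid:
  assumes "admissible_shift \<alpha>"
  shows "laminar (dyadic_subgrid \<alpha> p)"
proof -
  have nested: "dyadic_cube \<alpha> j' k' \<subseteq> dyadic_cube \<alpha> j k"
    if "even j = even j'" "j \<le> j'" "dyadic_cube \<alpha> j k \<inter> dyadic_cube \<alpha> j' k' \<noteq> {}" for j j' k k'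
  proof -
    have "even (j' - j)" using that(1) by simp
    then obtain m where m: "j' - j = 2 * m" by (rule evenE)
    then have "j' = j + 2 * int (nat m)" using that(2) by simp
    then show ?thesis using that(3) dyadic_cube_nested[OF assms] by blast
  qed
  show ?thesis
    unfolding laminar_def
  proof (intro ballI impI)
    fix A B assume "A \<in> dyadic_subgrid \<alpha> p" "B \<in> dyadic_subgrid \<alpha> p" and AB: "A \<inter> B \<noteq> {}"
    then obtain j k j' k' where A: "A = dyadic_cube \<alpha> j k" and B: "B = dyadic_cube \<alpha> j' k'"
      and "even j = even j'" unfolding dyadic_subgrid_def by auto
    then show "A \<subseteq> B \<or> B \<subseteq> A"
      using AB nested[of j j' k k'] nested[of j' j k' k] by (cases "j \<le> j'") (auto simp: inf_commute)
  qed
qed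

definition unit_cube :: "(real^'n) set" where
  "unit_cube = {y. \<forall>i. 0 \<le> y$i \<and> y$i < 1}"

lemma unit_cube_sets: "(unit_cube :: (real^'n) set) \<in> sets lborel"
  unfolding unit_cube_def by measurable

lemma emeasure_unit_cube: "emeasure lebesgue (unit_cube :: (real^'n) set) = 1"
proof -
  have One: "(One :: real^'n) $ i = 1" for i by (simp add: cart_eq_inner_axis)
  have sub: "box 0 One \<subseteq> (unit_cube :: (real^'n) set)" "unit_cube \<subseteq> cbox 0 (One :: real^'n)"
    unfolding unit_cube_def subset_iff mem_box_cart One by (auto simp: less_imp_le)
  have "emeasure lborel (box 0 (One :: real^'n)) \<le> emeasure lborel (unit_cube :: (real^'n) set)"
    by (rule emeasure_mono[OF sub(1) unit_cube_sets])
  moreover have "emeasure lborel (unit_cube :: (real^'n) set) \<le> emeasure lborel (cbox 0 (One :: real^'n))"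
    by (rule emeasure_mono[OF sub(2)]) simp
  moreover have "emeasure lborel (box 0 (One :: real^'n)) = 1" "emeasure lborel (cbox 0 (One :: real^'n)) = 1"
    by (simp_all add: emeasure_lborel_box_eq emeasure_lborel_cbox_eq)
  moreover have "emeasure lebesgue (unit_cube :: (real^'n) set) = emeasure lborel (unit_cube :: (real^'n) set)"
    using unit_cube_sets by (metis emeasure_completion main_part sets_completionI_sets)
  ultimately show ?thesis by simp
qed

lemma dyadic_cube_eq_image:
  fixes \<alpha> :: "real^'n" and j :: int and k :: "'n \<Rightarrow> int"
  defines "c \<equiv> 2 powr (- real_of_int j)" and "v \<equiv> (\<chi> i. \<alpha>$i + real_of_int (k i))"
  shows "dyadic_cube \<alpha> j k = (\<lambda>y. c *\<^sub>R y + c *\<^sub>R v) ` unit_cube"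
proof -
  have "0 < c" unfolding c_def by simp
  have "x \<in> dyadic_cube \<alpha> j k \<longleftrightarrow> (1 / c) *\<^sub>R x - v \<in> unit_cube" for x
    using \<open>0 < c\<close> unfolding dyadic_cube_def unit_cube_def c_def[symmetric] v_def
    by (auto simp: field_simps)
  moreover have "x = c *\<^sub>R ((1 / c) *\<^sub>R x - v) + c *\<^sub>R v" for x
    using \<open>0 < c\<close> by (simp add: algebra_simps)
  moreover have "(1 / c) *\<^sub>R (c *\<^sub>R y + c *\<^sub>R v) - v = y" for y
    using \<open>0 < c\<close> by (simp add: algebra_simps)
  ultimately show ?thesis by (metis (no_types, lifting) image_iff subsetI subset_antisym)
qed

lemma emeasure_dyadic_cube:
  "emeasure lebesgue (dyadic_cube (\<alpha> :: real^'n) j k) = ennreal ((2 powr - real_of_int j) ^ CARD('n))"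
  unfolding dyadic_cube_eq_image
  using emeasure_lebesgue_affine[of "2 powr - real_of_int j" _ "unit_cube :: (real^'n) set"]
  by (simp add: emeasure_unit_cube)

text \<open>
  The volume of the ball of radius d = CARD('n), which contains the unit cube when centred at one of
  its corners.
\<close>

definition cube_ball_ratio :: "'n::finite itself \<Rightarrow> real" where
  "cube_ball_ratio _ = unit_ball_vol CARD('n) * real CARD('n) ^ CARD('n)"

lemma cube_ball_ratio_pos: "0 < cube_ball_ratio TYPE('n::finite)"
  unfolding cube_ball_ratio_def by simp

lemma dyadic_cube_subset_ball:
  fixes \<alpha> :: "real^'n"
  obtains z r where "0 < r" "dyadic_cube \<alpha> j k \<subseteq> ball z r"
    "emeasure lebesgue (ball z r) = ennreal (cube_ball_ratio TYPE('n)) * emeasure lebesgue (dyadic_cube \<alpha> j k)"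
proof -
  define c where "c = 2 powr (- real_of_int j)"
  define v :: "real^'n" where "v = (\<chi> i. \<alpha>$i + real_of_int (k i))"
  define r where "r = c * CARD('n)"
  have "0 < c" "0 < r" unfolding r_def c_def by simp_all
  have "dyadic_cube \<alpha> j k \<subseteq> ball (c *\<^sub>R v) r"
  proof
    fix x assume "x \<in> dyadic_cube \<alpha> j k"
    then obtain y where y: "y \<in> unit_cube" and x: "x = c *\<^sub>R y + c *\<^sub>R v"
      unfolding dyadic_cube_eq_image c_def v_def by blast
    have "norm y \<le> (\<Sum>i\<in>UNIV. \<bar>y$i\<bar>)" by (rule norm_le_l1_cart)
    also have "\<dots> < (\<Sum>i\<in>(UNIV :: 'n set). 1)"
      using y unfolding unit_cube_def by (intro sum_strict_mono) auto
    finally have "c * norm y < r" unfolding r_def using \<open>0 < c\<close> by simp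
    then show "x \<in> ball (c *\<^sub>R v) r" unfolding x using \<open>0 < c\<close> by (simp add: dist_norm)
  qed
  moreover have "emeasure lebesgue (ball (c *\<^sub>R v) r) = ennreal (cube_ball_ratio TYPE('n)) * emeasure lebesgue (dyadic_cube \<alpha> j k)"
  proof -
    have "emeasure lebesgue (ball (c *\<^sub>R v) r) = emeasure lborel (ball (c *\<^sub>R v) r)"
      by (metis emeasure_completion main_part sets_completionI_sets sets_lborel borel_open open_ball)
    also have "\<dots> = ennreal (unit_ball_vol CARD('n) * r ^ CARD('n))"
      using emeasure_ball[of r "c *\<^sub>R v"] \<open>0 < r\<close> by simp
    also have "\<dots> = ennreal (cube_ball_ratio TYPE('n) * c ^ CARD('n))"
      unfolding r_def cube_ball_ratio_def by (simp add: power_mult_distrib ac_simps)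
    finally show ?thesis
      unfolding emeasure_dyadic_cube c_def by (simp add: ennreal_mult cube_ball_ratio_pos less_imp_le)
  qed
  ultimately show ?thesis using that \<open>0 < r\<close> by blast
qed

lemma dyadic_grid_sets: "Q \<in> dyadic_grid \<alpha> \<Longrightarrow> Q \<in> sets lebesgue"
proof -
  assume "Q \<in> dyadic_grid \<alpha>"
  then obtain j k where "Q = dyadic_cube \<alpha> j k" unfolding dyadic_grid_def by blast
  moreover have "dyadic_cube \<alpha> j k \<in> sets lborel" unfolding dyadic_cube_def by measurable
  ultimately show ?thesis by (simp add: sets_completionI_sets)
qed

lemma countable_dyadic_grid: "countable (dyadic_grid (\<alpha> :: real^'n))"
proof -
  have "dyadic_grid \<alpha> = (\<lambda>(j, k). dyadic_cube \<alpha> j k) ` (UNIV :: (int \<times> ('n \<Rightarrow> int)) set)"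
    unfolding dyadic_grid_def by auto
  then show ?thesis by simp
qed

lemma dyadic_grid_obtain_ball:
  fixes \<alpha> :: "real^'n"
  assumes "Q \<in> dyadic_grid \<alpha>"
  obtains z r where "0 < r" "Q \<subseteq> ball z r"
    "emeasure lebesgue (ball z r) = ennreal (cube_ball_ratio TYPE('n)) * emeasure lebesgue Q"
  using assms dyadic_cube_subset_ball unfolding dyadic_grid_def by blast

lemma emeasure_dyadic_grid_pos_finite:
  "Q \<in> dyadic_grid \<alpha> \<Longrightarrow> 0 < emeasure lebesgue Q \<and> emeasure lebesgue Q < \<infinity>"
  unfolding dyadic_grid_def by (auto simp: emeasure_dyadic_cube)

section \<open>Weights and sparse families\<close>

lemma wmeas_eq_emeasure_density:
  assumes "is_weight w" "A \<in> sets lebesgue"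
  shows "wmeas w A = emeasure (density lebesgue w) A"
proof -
  have "w \<in> borel_measurable lebesgue" using assms(1) unfolding is_weight_def by blast
  then have "(\<lambda>x. ennreal (w x)) \<in> borel_measurable lebesgue" by measurable
  then show ?thesis using assms(2) unfolding wmeas_def by (simp add: emeasure_density)
qed

lemma wmeas_dyadic_grid_finite:
  assumes w: "is_weight w" and Q: "Q \<in> dyadic_grid \<alpha>"
  shows "wmeas w Q < \<infinity>"
proof -
  obtain z r where "Q \<subseteq> ball z r" using dyadic_grid_obtain_ball[OF Q] by blast
  then have "bounded Q" by (rule bounded_subset[OF bounded_ball])
  then obtain R where "Q \<subseteq> ball 0 R" using bounded_subset_ballD by blast
  then have "Q \<subseteq> cball 0 R" by auto
  have "set_integrable lebesgue (cball 0 R) w" using w unfolding is_weight_def by blast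
  then have "(\<integral>\<^sup>+x. ennreal (indicator (cball 0 R) x *\<^sub>R w x) \<partial>lebesgue) < \<infinity>"
    unfolding set_integrable_def by (auto simp: less_top)
  moreover have "wmeas w Q \<le> (\<integral>\<^sup>+x. ennreal (indicator (cball 0 R) x *\<^sub>R w x) \<partial>lebesgue)"
    unfolding wmeas_def using \<open>Q \<subseteq> cball 0 R\<close> w unfolding is_weight_def
    by (intro nn_integral_mono) (auto simp: indicator_def)
  ultimately show ?thesis by (rule le_less_trans[rotated])
qed

text \<open>The average w(Q)/|B| over the ball B of volume rho |Q| enclosing Q.\<close>

definition ball_average :: "(real^'n \<Rightarrow> real) \<Rightarrow> (real^'n) set \<Rightarrow> ennreal" where
  "ball_average w Q = wmeas w Q / (ennreal (cube_ball_ratio TYPE('n)) * emeasure lebesgue Q)"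

lemma wmeas_eq_ball_average:
  fixes \<alpha> :: "real^'n"
  assumes "Q \<in> dyadic_grid \<alpha>"
  shows "wmeas w Q = ennreal (cube_ball_ratio TYPE('n)) * (ball_average w Q * emeasure lebesgue Q)"
proof -
  have "0 < emeasure lebesgue Q" "emeasure lebesgue Q < \<infinity>"
    using emeasure_dyadic_grid_pos_finite[OF assms] by blast+
  then have "ennreal (cube_ball_ratio TYPE('n)) * emeasure lebesgue Q \<noteq> 0"
    "ennreal (cube_ball_ratio TYPE('n)) * emeasure lebesgue Q < top"
    using cube_ball_ratio_pos[where 'n='n] by (auto simp: ennreal_mult_less_top)
  then have "ball_average w Q * (ennreal (cube_ball_ratio TYPE('n)) * emeasure lebesgue Q) = wmeas w Q"
    unfolding ball_average_def ennreal_divide_times by simp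
  then show ?thesis by (simp add: ac_simps)
qed

lemma ball_average_le_hl_max:
  fixes \<alpha> :: "real^'n"
  assumes w: "is_weight w" and Q: "Q \<in> dyadic_grid \<alpha>" "Q \<subseteq> R" and x: "x \<in> Q"
  shows "ball_average w Q \<le> hl_max (\<lambda>y. indicator R y * w y) x"
proof -
  obtain z r where r: "0 < r" "Q \<subseteq> ball z r"
    and ball: "emeasure lebesgue (ball z r) = ennreal (cube_ball_ratio TYPE('n)) * emeasure lebesgue Q"
    using dyadic_grid_obtain_ball[OF Q(1)] by blast
  have "wmeas w Q \<le> (\<integral>\<^sup>+y\<in>ball z r. ennreal \<bar>indicator R y * w y\<bar> \<partial>lebesgue)"
    unfolding wmeas_def using Q(2) r(2) w unfolding is_weight_def
    by (intro nn_integral_mono) (auto simp: indicator_def)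
  then have "wmeas w Q / emeasure lebesgue (ball z r)
      \<le> (\<integral>\<^sup>+y\<in>ball z r. ennreal \<bar>indicator R y * w y\<bar> \<partial>lebesgue) / emeasure lebesgue (ball z r)"
    by (rule divide_right_mono_ennreal)
  also have "\<dots> \<le> hl_max (\<lambda>y. indicator R y * w y) x"
    unfolding hl_max_def using r x by (intro SUP_upper2[of "(z, r)"]) auto
  finally show ?thesis unfolding ball_average_def ball .
qed

lemma set_nn_integral_hl_max_le_fw_const:
  assumes w: "is_weight w" and fw: "fw_const \<alpha> w < top" and R: "R \<in> dyadic_grid \<alpha>"
  shows "(\<integral>\<^sup>+x\<in>R. hl_max (\<lambda>y. indicator R y * w y) x \<partial>lebesgue) \<le> fw_const \<alpha> w * wmeas w R"
proof -
  define I where "I = (\<integral>\<^sup>+x\<in>R. hl_max (\<lambda>y. indicator R y * w y) x \<partial>lebesgue)"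
  have le: "I / wmeas w R \<le> fw_const \<alpha> w"
    unfolding fw_const_def I_def using R by (rule SUP_upper)
  show ?thesis
  proof (cases "wmeas w R = 0")
    case True
    then have "I = 0" using le fw by (auto simp: top_unique split: if_splits)
    then show ?thesis unfolding I_def by simp
  next
    case False
    have "I = I / wmeas w R * wmeas w R"
      using False wmeas_dyadic_grid_finite[OF w R] by (simp add: ennreal_divide_times)
    also have "\<dots> \<le> fw_const \<alpha> w * wmeas w R" using le by (rule mult_right_mono) simp
    finally show ?thesis unfolding I_def .
  qed
qed

lemma sparse_sum_wmeas_le:
  fixes \<alpha> :: "real^'n"
  assumes w: "is_weight w" "fw_const \<alpha> w < top" and R: "R \<in> dyadic_grid \<alpha>"
    and G: "finite G" "G \<subseteq> dyadic_grid \<alpha>" "\<And>Q. Q \<in> G \<Longrightarrow> Q \<subseteq> R"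
    and E: "\<And>Q. Q \<in> G \<Longrightarrow> E Q \<subseteq> Q" "\<And>Q. Q \<in> G \<Longrightarrow> E Q \<in> sets lebesgue"
      "\<And>Q. Q \<in> G \<Longrightarrow> ennreal \<eta> * emeasure lebesgue Q \<le> emeasure lebesgue (E Q)"
    and disjoint: "disjoint_family_on E G"
  shows "ennreal \<eta> * (\<Sum>Q\<in>G. wmeas w Q) \<le> ennreal (cube_ball_ratio TYPE('n)) * (fw_const \<alpha> w * wmeas w R)"
proof -
  define M where "M = hl_max (\<lambda>y. indicator R y * w y)"
  have pointwise: "(\<Sum>Q\<in>G. ball_average w Q * indicator (E Q) x) \<le> M x * indicator R x" for x
  proof (cases "\<exists>Q\<in>G. x \<in> E Q")
    case True
    then obtain Q where Q: "Q \<in> G" "x \<in> E Q" by blast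
    have "(\<Sum>Q'\<in>G. ball_average w Q' * indicator (E Q') x) = ball_average w Q"
      using disjoint Q(2) G(1) Q(1) by (rule sum_indicator_disjoint_family)
    also have "\<dots> \<le> M x"
      unfolding M_def using E(1) G Q by (intro ball_average_le_hl_max[OF w(1)]) auto
    finally have "(\<Sum>Q'\<in>G. ball_average w Q' * indicator (E Q') x) \<le> M x" .
    moreover have "x \<in> R" using E(1) G(3) Q by blast
    ultimately show ?thesis by simp
  qed auto
  have "(\<Sum>Q\<in>G. ball_average w Q * emeasure lebesgue (E Q))
      = (\<integral>\<^sup>+x. (\<Sum>Q\<in>G. ball_average w Q * indicator (E Q) x) \<partial>lebesgue)"
    using E(2) by (simp add: nn_integral_sum nn_integral_cmult_indicator)
  also have "\<dots> \<le> (\<integral>\<^sup>+x\<in>R. M x \<partial>lebesgue)"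
    using pointwise by (intro nn_integral_mono) (simp add: mult.commute)
  also have "\<dots> \<le> fw_const \<alpha> w * wmeas w R"
    unfolding M_def by (rule set_nn_integral_hl_max_le_fw_const[OF w R])
  finally have averages: "(\<Sum>Q\<in>G. ball_average w Q * emeasure lebesgue (E Q)) \<le> fw_const \<alpha> w * wmeas w R" .
  have "ennreal \<eta> * (\<Sum>Q\<in>G. wmeas w Q)
      = (\<Sum>Q\<in>G. ennreal (cube_ball_ratio TYPE('n)) * (ball_average w Q * (ennreal \<eta> * emeasure lebesgue Q)))"
    unfolding sum_distrib_left using G(2) wmeas_eq_ball_average[where \<alpha> = \<alpha>]
    by (intro sum.cong) (auto simp: ac_simps)
  also have "\<dots> \<le> (\<Sum>Q\<in>G. ennreal (cube_ball_ratio TYPE('n)) * (ball_average w Q * emeasure lebesgue (E Q)))"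
    using E(3) by (intro sum_mono mult_left_mono) auto
  also have "\<dots> \<le> ennreal (cube_ball_ratio TYPE('n)) * (fw_const \<alpha> w * wmeas w R)"
    unfolding sum_distrib_left[symmetric] using averages by (rule mult_left_mono) simp
  finally show ?thesis .
qed

lemma sparse_carleson_packing:
  fixes \<alpha> :: "real^'n"
  assumes w: "is_weight w" "fw_const \<alpha> w < top" and \<eta>: "0 < \<eta>"
    and S: "S \<subseteq> dyadic_grid \<alpha>" "sparse \<eta> S"
  shows "carleson_packing (density lebesgue w) (cube_ball_ratio TYPE('n) * enn2real (fw_const \<alpha> w) / \<eta>) S"
  unfolding carleson_packing_def
proof (intro ballI allI impI)
  fix R G assume R: "R \<in> S" and G: "G \<subseteq> S" "finite G" "\<forall>Q\<in>G. Q \<subseteq> R"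
  from S(2)[unfolded sparse_def] obtain E where
    E: "\<forall>Q\<in>S. E Q \<subseteq> Q \<and> E Q \<in> sets lebesgue \<and> ennreal \<eta> * emeasure lebesgue Q \<le> emeasure lebesgue (E Q)"
    and disjoint: "\<forall>Q\<in>S. \<forall>Q'\<in>S. Q \<noteq> Q' \<longrightarrow> E Q \<inter> E Q' = {}"
    by (elim exE conjE)
  define \<rho> where "\<rho> = cube_ball_ratio TYPE('n)"
  define F where "F = enn2real (fw_const \<alpha> w)"
  have "0 < \<rho>" "0 \<le> F" "fw_const \<alpha> w = ennreal F"
    unfolding \<rho>_def F_def using cube_ball_ratio_pos w(2) by auto
  have "disjoint_family_on E G" using disjoint G(1) unfolding disjoint_family_on_def by blast
  then have "ennreal \<eta> * (\<Sum>Q\<in>G. wmeas w Q) \<le> ennreal \<rho> * (ennreal F * wmeas w R)"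
    unfolding \<rho>_def \<open>fw_const \<alpha> w = ennreal F\<close>[symmetric]
    using R G E S(1) by (intro sparse_sum_wmeas_le[OF w]) auto
  then have "ennreal (1 / \<eta>) * (ennreal \<eta> * (\<Sum>Q\<in>G. wmeas w Q)) \<le> ennreal (1 / \<eta>) * (ennreal \<rho> * (ennreal F * wmeas w R))"
    by (rule mult_left_mono) simp
  moreover have "ennreal (1 / \<eta>) * ennreal \<eta> = 1" "ennreal (1 / \<eta>) * (ennreal \<rho> * ennreal F) = ennreal (\<rho> * F / \<eta>)"
    using \<eta> \<open>0 < \<rho>\<close> \<open>0 \<le> F\<close> by (simp_all add: ennreal_mult[symmetric])
  ultimately have "(\<Sum>Q\<in>G. wmeas w Q) \<le> ennreal (\<rho> * F / \<eta>) * wmeas w R"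
    by (simp add: mult.assoc[symmetric])
  moreover have "wmeas w Q = emeasure (density lebesgue w) Q" if "Q \<in> S" for Q
    using that S(1) by (intro wmeas_eq_emeasure_density[OF w(1)] dyadic_grid_sets) auto
  ultimately show "(\<Sum>Q\<in>G. emeasure (density lebesgue w) Q) \<le> ennreal (\<rho> * F / \<eta>) * emeasure (density lebesgue w) R"
    using R G(1) by (simp add: subset_eq)
qed

lemma sparse_level_set_tail_le:
  fixes \<alpha> :: "real^'n"
  assumes \<alpha>: "admissible_shift \<alpha>" and w: "is_weight w" "fw_const \<alpha> w < top"
    and \<eta>: "0 < \<eta>" and S: "S \<subseteq> dyadic_grid \<alpha>" "sparse \<eta> S" and Q0: "Q0 \<in> S" and "0 \<le> lam"
  shows "wmeas w {x\<in>Q0. ennreal lam < h_count S Q0 x}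
    \<le> ennreal (4 * exp (- lam / (9 * (cube_ball_ratio TYPE('n) * enn2real (fw_const \<alpha> w) / \<eta>)))) * wmeas w Q0"
proof -
  have S_sets: "S \<subseteq> sets (density lebesgue w)" using S(1) dyadic_grid_sets by auto
  have "countable S" using S(1) countable_dyadic_grid countable_subset by blast
  have "S \<subseteq> dyadic_subgrid \<alpha> True \<union> dyadic_subgrid \<alpha> False"
    using S(1) dyadic_grid_eq_subgrids by blast
  note tail = carleson_tail_le[OF sparse_carleson_packing[OF w \<eta> S] \<open>countable S\<close> S_sets this
      laminar_dyadic_subgrid[OF \<alpha>] laminar_dyadic_subgrid[OF \<alpha>] Q0 \<open>0 \<le> lam\<close>]
  have "{x\<in>Q0. ennreal lam < h_count S Q0 x} \<in> sets lebesgue"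
    unfolding h_count_def using S_sets Q0 \<open>countable S\<close>
    by (intro level_set_sets borel_measurable_infsum_indicator) auto
  then show ?thesis
    using tail S_sets Q0 w(1) by (simp add: wmeas_eq_emeasure_density h_count_def subset_eq)
qed

theorem lemma4p3:
  shows "\<exists>\<delta>::real. \<delta> > 0 \<and> (\<exists>C::real. C > 0 \<and>
    (\<forall>(\<alpha>::real^'n) w S \<eta> Q0 (lam::real).
       admissible_shift \<alpha> \<longrightarrow> is_weight w \<longrightarrow> fw_const \<alpha> w < top \<longrightarrow>
       0 < \<eta> \<longrightarrow> S \<subseteq> dyadic_grid \<alpha> \<longrightarrow> sparse \<eta> S \<longrightarrow> Q0 \<in> S \<longrightarrow> 0 < lam \<longrightarrow>
       wmeas w {x\<in>Q0. ennreal lam < h_count S Q0 x}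
         \<le> ennreal (C * exp (- (\<eta> * \<delta> / enn2real (fw_const \<alpha> w)) * lam)) * wmeas w Q0))"
proof -
  define \<rho> where "\<rho> = cube_ball_ratio TYPE('n)"
  define \<delta> where "\<delta> = 1 / (9 * \<rho>)"
  have "0 < \<rho>" unfolding \<rho>_def by (rule cube_ball_ratio_pos)
  then have "0 < \<delta>" unfolding \<delta>_def by simp
  have rate: "- lam / (9 * (\<rho> * F / \<eta>)) = - (\<eta> * \<delta> / F) * lam" if "0 < \<eta>" for \<eta> F lam :: real
    using \<open>0 < \<rho>\<close> that unfolding \<delta>_def by (cases "F = 0") (simp_all add: field_simps)
  have "wmeas w {x\<in>Q0. ennreal lam < h_count S Q0 x}
      \<le> ennreal (4 * exp (- (\<eta> * \<delta> / enn2real (fw_const \<alpha> w)) * lam)) * wmeas w Q0"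
    if "admissible_shift \<alpha>" "is_weight w" "fw_const \<alpha> w < top" "0 < \<eta>" "S \<subseteq> dyadic_grid \<alpha>"
      "sparse \<eta> S" "Q0 \<in> S" "0 < lam" for \<alpha> :: "real^'n" and w S \<eta> Q0 lam
    using sparse_level_set_tail_le[OF that(1-7) less_imp_le[OF that(8)]] rate[OF that(4)]
    unfolding \<rho>_def by simp
  with \<open>0 < \<delta>\<close> show ?thesis by (intro exI[of _ \<delta>] conjI exI[of _ "4::real"] allI impI) auto
qed

end
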